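(* Let $q=p^m$ with $p$ prime, let $\gamma$ be such that $\mathbb{F}_q=\mathbb{F}_p[\gamma]$, and let $t=\lfloor\frac{m-1}{2}\rfloor$. Let $n,k$ be integers with $4\le k\le\frac{n-1}{2}$ and $n\le p^t$, and let $h=k+1$. Let $\alpha_1,\dots,\alpha_n$ be pairwise distinct elements of $\mathbb{F}_q$ of the form $\alpha_i=\gamma^t+\sum_{j=0}^{t-1}a_{ij}\gamma^j$ with $a_{ij}\in\mathbb{F}_p$. Let $C_{h,k}$ be the linear code generated by the $k\times n$ matrix whose rows are $(\alpha_1^{e},\dots,\alpha_n^{e})$ for $e=0,1,\dots,k-2$ and $e=h$. If $p\nmid\frac{k(k+1)}{2}$, then $C_{h,k}$ is a non-GRS MDS code over $\mathbb{F}_q$.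
   Context: Convention: $0^0=1$. A linear code is MDS if its parameters $[n,k,d]$ satisfy $d=n-k+1$. For pairwise distinct $a_1,\dots,a_n\in\mathbb{F}_q$ and $w\in(\mathbb{F}_q^* )^n$, $GRS(n,k,\{a_i\},w)=\{(w_1f(a_1),\dots,w_nf(a_n)) : f\in\mathbb{F}_q[x],\ \deg f\le k-1\}$. Two codes are (monomially) equivalent if one is obtained from the other by permuting coordinates and scaling coordinates by nonzero scalars. A non-GRS MDS code is an MDS code not equivalent to any GRS code. *)

theory Defs
  imports "HOL-Computational_Algebra.Polynomial" "HOL-Library.Cardinality" "HOL-Combinatorics.Permutations"
begin

text \<open>Words of length n over a field 'a are modelled as functions nat => 'a
  that vanish outside the index set {..<n}. A code of length n is a set of such words.\<close>

definition hamming_weight :: "nat \<Rightarrow> (nat \<Rightarrow> 'a::zero) \<Rightarrow> nat" where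
  "hamming_weight n c = card {i. i < n \<and> c i \<noteq> 0}"

definition is_word :: "nat \<Rightarrow> (nat \<Rightarrow> 'a::zero) \<Rightarrow> bool" where
  "is_word n c \<longleftrightarrow> (\<forall>i\<ge>n. c i = 0)"

definition linear_code :: "nat \<Rightarrow> (nat \<Rightarrow> 'a::field) set \<Rightarrow> bool" where
  "linear_code n C \<longleftrightarrow> (\<forall>c\<in>C. is_word n c) \<and> (\<lambda>_. 0) \<in> C \<and>
     (\<forall>x\<in>C. \<forall>y\<in>C. (\<lambda>i. x i + y i) \<in> C) \<and> (\<forall>a. \<forall>x\<in>C. (\<lambda>i. a * x i) \<in> C)"

definition code_dim :: "(nat \<Rightarrow> 'a::{field,finite}) set \<Rightarrow> nat" where
  "code_dim C = (THE k. card C = CARD('a) ^ k)"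

definition min_distance :: "nat \<Rightarrow> (nat \<Rightarrow> 'a::zero) set \<Rightarrow> nat" where
  "min_distance n C = Min (hamming_weight n ` (C - {\<lambda>_. 0}))"

definition is_MDS :: "nat \<Rightarrow> (nat \<Rightarrow> 'a::{field,finite}) set \<Rightarrow> bool" where
  "is_MDS n C \<longleftrightarrow> linear_code n C \<and> min_distance n C = n - code_dim C + 1"

definition gen_code :: "nat \<Rightarrow> nat \<Rightarrow> (nat \<Rightarrow> nat \<Rightarrow> 'a::field) \<Rightarrow> (nat \<Rightarrow> 'a) set" where
  "gen_code k n G = {(\<lambda>i. if i < n then (\<Sum>r<k. u r * G r i) else 0) | u. True}"

definition GRS :: "nat \<Rightarrow> nat \<Rightarrow> (nat \<Rightarrow> 'a::field) \<Rightarrow> (nat \<Rightarrow> 'a) \<Rightarrow> (nat \<Rightarrow> 'a) set" where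
  "GRS n k a w = {(\<lambda>i. if i < n then w i * poly f (a i) else 0) | f. degree f \<le> k - 1}"

definition code_equiv :: "nat \<Rightarrow> (nat \<Rightarrow> 'a::field) set \<Rightarrow> (nat \<Rightarrow> 'a) set \<Rightarrow> bool" where
  "code_equiv n C D \<longleftrightarrow> (\<exists>\<sigma> s. \<sigma> permutes {..<n} \<and> (\<forall>i<n. s i \<noteq> 0) \<and>
     D = (\<lambda>c. (\<lambda>i. if i < n then s i * c (\<sigma> i) else 0)) ` C)"

definition is_GRS_equiv :: "nat \<Rightarrow> (nat \<Rightarrow> 'a::field) set \<Rightarrow> bool" where
  "is_GRS_equiv n C \<longleftrightarrow> (\<exists>k a w. inj_on a {..<n} \<and> (\<forall>i<n. w i \<noteq> 0) \<and>
      code_equiv n C (GRS n k a w))"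

definition non_GRS_MDS :: "nat \<Rightarrow> (nat \<Rightarrow> 'a::{field,finite}) set \<Rightarrow> bool" where
  "non_GRS_MDS n C \<longleftrightarrow> is_MDS n C \<and> \<not> is_GRS_equiv n C"

definition prime_subfield :: "'a::field set" where
  "prime_subfield = range of_nat"

definition generates_field :: "'a::field \<Rightarrow> bool" where
  "generates_field \<gamma> \<longleftrightarrow> (\<forall>x. \<exists>f. (\<forall>j. coeff f j \<in> prime_subfield) \<and> poly f \<gamma> = x)"

end

(*
  Every codeword of C_{k+1,k} is (f(alpha_i))_i for a polynomial f in the span of
  1, x, ..., x^(k-2), x^(k+1).

  MDS: if a nonzero such f vanished at k of the points, their monic product P of degree k
  would divide f, so f = P (q0 + q1 x), and the vanishing coefficients of x^k and x^(k-1)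
  in f force e1^2 = e2 for the elementary symmetric functions of these points, i.e.
  h2 = e1^2 - e2 = 0.  But alpha_i = A_i(gamma) with A_i monic of degree t over F_p, so
  h2 is the value at gamma of an F_p-polynomial of degree 2t < m with leading coefficient
  1 + 2 + ... + k = k(k+1)/2, which is nonzero mod p; as F_q has degree m over F_p,
  gamma is not a root of such a polynomial.

  Non-GRS: a code equivalent to a GRS code is itself GRS, and the componentwise products
  of codewords of a k-dimensional GRS code lie in a (2k-1)-dimensional GRS code.  The
  products of rows of our generator matrix give (alpha_i^e)_i for every e < 2k, and these
  span a space of dimension 2k because n >= 2k.
*)

theory Submission
  imports Defs "HOL-Number_Theory.Residues"
begin

(* Residues (needed for CHAR_dvd_CARD) loads HOL-Algebra, whose polynomial constants would
   shadow those of HOL-Computational_Algebra. *)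
hide_const (open) UnivPoly.coeff UnivPoly.monom Module.smult

section \<open>The prime field and the generator\<close>

lemma one_less_CARD_field: "1 < CARD('a::{field,finite})"
proof -
  have "card {0::'a, 1} \<le> CARD('a)" by (intro card_mono) auto
  then show ?thesis by simp
qed

lemma CHAR_eq_if_CARD_prime_power:
  assumes "prime p" and "CARD('a::{field,finite}) = p ^ m"
  shows "CHAR('a) = p"
proof -
  have "prime CHAR('a)"
    by (rule prime_CHAR_semidom) (simp add: finite_imp_CHAR_pos)
  moreover have "CHAR('a) dvd p ^ m"
    using CHAR_dvd_CARD[where 'a='a] assms(2) by simp
  ultimately show ?thesis
    using assms(1) by (metis prime_dvd_power primes_dvd_imp_eq)
qed

lemma Ints_inverse_finite_field:
  fixes x :: "'a::{field,finite}"
  assumes "x \<in> \<int>"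
  shows "inverse x \<in> \<int>"
proof (cases "x = 0")
  case False
  have "(\<lambda>y. x * y) ` \<int> = \<int>"
    by (rule endo_inj_surj) (auto simp: inj_on_def False intro: Ints_mult[OF assms])
  then obtain y where "y \<in> \<int>" "x * y = 1"
    by (metis Ints_1 imageE)
  then show ?thesis
    using inverse_unique by metis
qed simp

lemma card_Ints_le_CHAR:
  assumes "CHAR('a::comm_ring_1) > 0"
  shows "card (\<int> :: 'a set) \<le> CHAR('a)"
proof -
  have "(\<int> :: 'a set) \<subseteq> of_nat ` {..<CHAR('a)}"
  proof
    fix x :: 'a
    assume "x \<in> \<int>"
    then obtain z where x: "x = of_int z"
      by (auto elim: Ints_cases)
    have "x = of_int (z mod int CHAR('a))"
      unfolding x of_int_eq_iff_cong_CHAR by (simp add: cong_def)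
    also have "\<dots> = of_nat (nat (z mod int CHAR('a)))"
      using assms by simp
    finally show "x \<in> of_nat ` {..<CHAR('a)}"
      by (rule image_eqI) (use assms in \<open>simp add: nat_less_iff\<close>)
  qed
  then have "card (\<int> :: 'a set) \<le> card (of_nat ` {..<CHAR('a)} :: 'a set)"
    by (intro card_mono) auto
  also have "\<dots> \<le> CHAR('a)"
    using card_image_le[of "{..<CHAR('a)}" of_nat] by simp
  finally show ?thesis .
qed

lemma poly_eq_sum_lessThan:
  fixes f :: "'a::comm_semiring_1 poly"
  assumes "degree f < N"
  shows "poly f x = (\<Sum>j<N. coeff f j * x ^ j)"
proof -
  have "poly f x = (\<Sum>j\<le>degree f. coeff f j * x ^ j)"
    by (simp add: poly_altdef)
  also have "\<dots> = (\<Sum>j<N. coeff f j * x ^ j)"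
    using assms by (intro sum.mono_neutral_left) (auto simp: coeff_eq_0)
  finally show ?thesis .
qed

lemma poly_reduce_by_monic_root:
  fixes G f :: "'a::comm_ring_1 poly"
  assumes monic: "lead_coeff G = 1" and root: "poly G \<gamma> = 0"
    and G_Ints: "\<forall>j. coeff G j \<in> \<int>" and f_Ints: "\<forall>j. coeff f j \<in> \<int>"
  obtains r where "\<forall>j. coeff r j \<in> \<int>" "degree r < degree G" "poly r \<gamma> = poly f \<gamma>"
proof -
  have deg: "degree G > 0"
  proof (rule ccontr)
    assume "\<not> degree G > 0"
    then have "G = [:1:]"
      using monic by (metis degree_0_id neq0_conv)
    then show False
      using root by simp
  qed
  have "\<exists>r. (\<forall>j. coeff r j \<in> \<int>) \<and> degree r < degree G \<and> poly r \<gamma> = poly f \<gamma>"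
    using f_Ints
  proof (induction f rule: pCons_induct)
    case 0
    show ?case
      using deg by (intro exI[of _ 0]) auto
  next
    case (pCons a f)
    have "a \<in> \<int>" "\<forall>j. coeff f j \<in> \<int>"
      using pCons.prems by (metis coeff_pCons_0, metis coeff_pCons_Suc)
    then obtain r where r: "\<forall>j. coeff r j \<in> \<int>" "degree r < degree G" "poly r \<gamma> = poly f \<gamma>"
      using pCons.IH by blast
    define c where "c = coeff (pCons a r) (degree G)"
    define r' where "r' = pCons a r - smult c G"
    have "\<forall>j. coeff (pCons a r) j \<in> \<int>"
      using \<open>a \<in> \<int>\<close> r(1) by (simp add: coeff_pCons split: nat.split)
    then have "\<forall>j. coeff r' j \<in> \<int>"
      using G_Ints by (simp add: r'_def c_def Ints_diff Ints_mult)
    moreover have "degree r' < degree G"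
    proof (rule degree_lessI)
      show "\<forall>j\<ge>degree G. coeff r' j = 0"
      proof (intro allI impI)
        fix j
        assume "degree G \<le> j"
        then show "coeff r' j = 0"
          using r(2) monic
          by (cases "j = degree G") (auto simp: r'_def c_def coeff_pCons coeff_eq_0 split: nat.split)
      qed
    qed (use deg in simp)
    moreover have "poly r' \<gamma> = poly (pCons a f) \<gamma>"
      using r(3) root by (simp add: r'_def)
    ultimately show ?case
      by blast
  qed
  then show ?thesis
    using that by blast
qed

lemma CARD_le_card_Ints_power_if_monic_root:
  fixes \<gamma> :: "'a::{field,finite}" and G :: "'a poly"
  assumes gen: "generates_field \<gamma>"
    and G: "lead_coeff G = 1" "poly G \<gamma> = 0" "\<forall>j. coeff G j \<in> \<int>"
  shows "CARD('a) \<le> card (\<int> :: 'a set) ^ degree G"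
proof -
  define d where "d = degree G"
  have "UNIV \<subseteq> (\<lambda>c. \<Sum>j<d. c j * \<gamma> ^ j) ` PiE {..<d} (\<lambda>_. \<int>)"
  proof
    fix x :: 'a
    obtain f where "\<forall>j. coeff f j \<in> prime_subfield" "poly f \<gamma> = x"
      using gen unfolding generates_field_def by blast
    moreover have "prime_subfield \<subseteq> (\<int> :: 'a set)"
      by (auto simp: prime_subfield_def)
    ultimately obtain r where r: "\<forall>j. coeff r j \<in> \<int>" "degree r < d" "poly r \<gamma> = x"
      using poly_reduce_by_monic_root[OF G, of f] unfolding d_def by blast
    then have "x = (\<Sum>j<d. restrict (coeff r) {..<d} j * \<gamma> ^ j)"
      using poly_eq_sum_lessThan[of r d] by simp
    moreover have "restrict (coeff r) {..<d} \<in> PiE {..<d} (\<lambda>_. \<int>)"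
      using r(1) by simp
    ultimately show "x \<in> (\<lambda>c. \<Sum>j<d. c j * \<gamma> ^ j) ` PiE {..<d} (\<lambda>_. \<int>)"
      by blast
  qed
  then have "CARD('a) \<le> card ((\<lambda>c. \<Sum>j<d. c j * \<gamma> ^ j) ` PiE {..<d} (\<lambda>_. \<int>))"
    by (intro card_mono) auto
  also have "\<dots> \<le> card (PiE {..<d} (\<lambda>_. \<int> :: 'a set))"
    by (rule card_image_le) (simp add: finite_PiE)
  also have "\<dots> = card (\<int> :: 'a set) ^ d"
    by (simp add: card_PiE)
  finally show ?thesis
    by (simp add: d_def)
qed

lemma poly_generator_ne_0:
  fixes \<gamma> :: "'a::{field,finite}" and g :: "'a poly"
  assumes p: "prime p" and card: "CARD('a) = p ^ m" and gen: "generates_field \<gamma>"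
    and g: "g \<noteq> 0" "\<forall>j. coeff g j \<in> \<int>" "degree g < m"
  shows "poly g \<gamma> \<noteq> 0"
proof
  assume "poly g \<gamma> = 0"
  then have "CARD('a) \<le> card (\<int> :: 'a set) ^ degree g"
    using CARD_le_card_Ints_power_if_monic_root[OF gen, of "smult (inverse (lead_coeff g)) g"] g
    by (simp add: Ints_mult Ints_inverse_finite_field)
  also have "\<dots> \<le> p ^ degree g"
    using card_Ints_le_CHAR[where 'a='a] CHAR_eq_if_CARD_prime_power[OF p card] prime_gt_0_nat[OF p]
    by (simp add: power_mono)
  also have "\<dots> < p ^ m"
    using g(3) prime_gt_1_nat[OF p] by simp
  finally show False
    using card by simp
qed

section \<open>The symmetric function h2\<close>

lemma coeff_mult_at_degree_bounds:
  fixes p q :: "'a::comm_semiring_1 poly"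
  assumes "degree p \<le> a" "degree q \<le> b"
  shows "coeff (p * q) (a + b) = coeff p a * coeff q b"
proof (cases "degree p = a \<and> degree q = b")
  case True
  then show ?thesis
    using coeff_mult_degree_sum[of p q] by simp
next
  case False
  then have "degree p < a \<or> degree q < b"
    using assms by auto
  moreover have "degree (p * q) < a + b"
    using degree_mult_le[of p q] assms calculation by linarith
  ultimately show ?thesis
    by (auto simp: coeff_eq_0)
qed

lemma coeff_mult_Ints:
  assumes "\<forall>j. coeff p j \<in> \<int>" "\<forall>j. coeff q j \<in> \<int>"
  shows "coeff (p * q) j \<in> \<int>"
  using assms by (auto simp: coeff_mult intro: Ints_mult)

lemma coeff_prod_one_minus_linear:
  fixes \<beta> :: "'i \<Rightarrow> 'a::comm_ring_1"
  assumes "finite S"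
  shows "coeff (\<Prod>i\<in>S. [:1, - \<beta> i:]) 0 = 1"
    and "coeff (\<Prod>i\<in>S. [:1, - \<beta> i:]) 1 = - (\<Sum>i\<in>S. \<beta> i)"
  using assms by (induction S rule: finite_induct) (auto simp: algebra_simps)

(* Coefficients 1 and 2 of the reversed product are -e1 and e2, so sym_h2 is e1^2 - e2,
   the complete homogeneous sum of all beta_i beta_j with i <= j. *)
definition sym_h2 :: "('i \<Rightarrow> 'a::comm_ring_1) \<Rightarrow> 'i set \<Rightarrow> 'a" where
  "sym_h2 \<beta> S = coeff (\<Prod>i\<in>S. [:1, - \<beta> i:]) 1 ^ 2 - coeff (\<Prod>i\<in>S. [:1, - \<beta> i:]) 2"

lemma sym_h2_empty [simp]: "sym_h2 \<beta> {} = 0"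
  by (simp add: sym_h2_def)

lemma sym_h2_insert:
  assumes "finite F" "x \<notin> F"
  shows "sym_h2 \<beta> (insert x F) = sym_h2 \<beta> F + \<beta> x * (\<Sum>i\<in>insert x F. \<beta> i)"
proof -
  define R where "R = (\<Prod>i\<in>F. [:1, - \<beta> i:])"
  have step: "coeff ([:1, - \<beta> x:] * R) (Suc j) = coeff R (Suc j) - \<beta> x * coeff R j" for j
    by simp
  have R: "coeff R 0 = 1" "coeff R 1 = - (\<Sum>i\<in>F. \<beta> i)"
    using coeff_prod_one_minus_linear[OF assms(1)] by (simp_all add: R_def)
  have "sym_h2 \<beta> (insert x F) = (coeff R 1 - \<beta> x) ^ 2 - (coeff R 2 - \<beta> x * coeff R 1)"
    using assms step[of 0] step[of 1] R(1) by (simp add: sym_h2_def R_def numeral_2_eq_2)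
  then show ?thesis
    using assms R(2) by (simp add: sym_h2_def R_def algebra_simps power2_eq_square)
qed

(* Each of the 1 + 2 + ... + card S products beta_i beta_j with i <= j contributes 1 to the
   coefficient of gamma^(2t). *)
lemma sym_h2_eq_poly:
  fixes A :: "'i \<Rightarrow> 'a::comm_ring_1 poly"
  assumes "finite S"
    and "\<And>i. i \<in> S \<Longrightarrow> degree (A i) \<le> t \<and> coeff (A i) t = 1 \<and> (\<forall>j. coeff (A i) j \<in> \<int>)"
  obtains H where "sym_h2 (\<lambda>i. poly (A i) \<gamma>) S = poly H \<gamma>" "\<forall>j. coeff H j \<in> \<int>"
    "degree H \<le> 2 * t" "coeff H (2 * t) = of_nat (\<Sum>{0..card S})"
proof -
  have "\<exists>H. sym_h2 (\<lambda>i. poly (A i) \<gamma>) S = poly H \<gamma> \<and> (\<forall>j. coeff H j \<in> \<int>) \<and> degree H \<le> 2 * t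
      \<and> coeff H (2 * t) = of_nat (\<Sum>{0..card S})"
    using assms
  proof (induction S rule: finite_induct)
    case empty
    show ?case
      by (intro exI[of _ 0]) simp
  next
    case (insert x F)
    obtain H where H: "sym_h2 (\<lambda>i. poly (A i) \<gamma>) F = poly H \<gamma>" "\<forall>j. coeff H j \<in> \<int>"
      "degree H \<le> 2 * t" "coeff H (2 * t) = of_nat (\<Sum>{0..card F})"
      using insert by auto
    have A: "degree (A x) \<le> t" "coeff (A x) t = 1" "\<forall>j. coeff (A x) j \<in> \<int>"
      using insert.prems by auto
    define E where "E = (\<Sum>i\<in>insert x F. A i)"
    have E: "degree E \<le> t" "coeff E t = of_nat (card F + 1)" "\<forall>j. coeff E j \<in> \<int>"
      unfolding E_def using insert
      by (auto simp: coeff_sum intro!: degree_sum_le Ints_sum simp del: sum.insert)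
    have "sym_h2 (\<lambda>i. poly (A i) \<gamma>) (insert x F) = poly (H + A x * E) \<gamma>"
      using H(1) insert.hyps by (simp add: sym_h2_insert E_def poly_sum)
    moreover have "degree (A x * E) \<le> 2 * t"
      using degree_mult_le[of "A x" E] A(1) E(1) by linarith
    then have "degree (H + A x * E) \<le> 2 * t"
      using H(3) by (rule degree_add_le[rotated])
    moreover have "coeff (A x * E) (t + t) = of_nat (card F + 1)"
      using coeff_mult_at_degree_bounds[OF A(1) E(1)] A(2) E(2) by simp
    then have "coeff (H + A x * E) (2 * t) = of_nat (\<Sum>{0..card (insert x F)})"
      using H(4) insert.hyps by (simp add: mult_2 sum.atLeast0_atMost_Suc)
    moreover have "\<forall>j. coeff (H + A x * E) j \<in> \<int>"
      using H(2) A(3) E(3) by (simp add: Ints_add coeff_mult_Ints)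
    ultimately show ?case
      by blast
  qed
  then show ?thesis
    using that by blast
qed

lemma monic_Ints_poly_repr:
  fixes \<gamma> :: "'a::field"
  assumes "\<forall>j<t. a j \<in> prime_subfield"
  shows "\<exists>A. \<gamma> ^ t + (\<Sum>j<t. a j * \<gamma> ^ j) = poly A \<gamma> \<and> degree A \<le> t \<and> coeff A t = 1
           \<and> (\<forall>j. coeff A j \<in> \<int>)"
proof (intro exI conjI)
  let ?A = "monom 1 t + (\<Sum>j<t. monom (a j) j)"
  show "\<gamma> ^ t + (\<Sum>j<t. a j * \<gamma> ^ j) = poly ?A \<gamma>"
    by (simp add: poly_sum poly_monom)
  show "degree ?A \<le> t"
    by (intro degree_add_le degree_sum_le) (auto intro: order_trans[OF degree_monom_le])
  show "coeff ?A t = 1"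
    by (simp add: coeff_sum)
  show "\<forall>j. coeff ?A j \<in> \<int>"
    using assms by (auto simp: coeff_sum coeff_monom prime_subfield_def)
qed

lemma sym_h2_ne_0:
  fixes \<gamma> :: "'a::{field,finite}" and \<alpha> :: "'i \<Rightarrow> 'a"
  assumes p: "prime p" and card: "CARD('a) = p ^ m" and gen: "generates_field \<gamma>"
    and t: "2 * t < m" and S: "finite S" "\<not> p dvd card S * (card S + 1) div 2"
    and \<alpha>: "\<And>i. i \<in> S \<Longrightarrow>
      \<exists>A. \<alpha> i = poly A \<gamma> \<and> degree A \<le> t \<and> coeff A t = 1 \<and> (\<forall>j. coeff A j \<in> \<int>)"
  shows "sym_h2 \<alpha> S \<noteq> 0"
proof -
  obtain A where A: "\<And>i. i \<in> S \<Longrightarrow>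
      \<alpha> i = poly (A i) \<gamma> \<and> degree (A i) \<le> t \<and> coeff (A i) t = 1 \<and> (\<forall>j. coeff (A i) j \<in> \<int>)"
    using \<alpha> by metis
  have "sym_h2 \<alpha> S = sym_h2 (\<lambda>i. poly (A i) \<gamma>) S"
    unfolding sym_h2_def using A by (simp cong: prod.cong)
  moreover obtain H where H: "sym_h2 (\<lambda>i. poly (A i) \<gamma>) S = poly H \<gamma>" "\<forall>j. coeff H j \<in> \<int>"
    "degree H \<le> 2 * t" "coeff H (2 * t) = of_nat (\<Sum>{0..card S})"
    using sym_h2_eq_poly[OF S(1), of A t \<gamma>] A by blast
  moreover have "coeff H (2 * t) \<noteq> 0"
    using H(4) S(2) CHAR_eq_if_CARD_prime_power[OF p card]
    by (simp add: gauss_sum_nat of_nat_eq_0_iff_char_dvd)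
  then have "poly H \<gamma> \<noteq> 0"
    using poly_generator_ne_0[OF p card gen _ H(2)] H(3) t by fastforce
  ultimately show ?thesis
    by simp
qed

section \<open>Polynomials supported on 0, ..., k - 2 and k + 1\<close>

lemma prod_linear_dvd_if_roots:
  fixes f :: "'a::idom poly"
  assumes "finite S" "inj_on \<alpha> S" "\<forall>i\<in>S. poly f (\<alpha> i) = 0"
  shows "(\<Prod>i\<in>S. [:- \<alpha> i, 1:]) dvd f"
  using assms
proof (induction S arbitrary: f rule: finite_induct)
  case empty
  then show ?case by simp
next
  case (insert x F)
  obtain g where g: "f = [:- \<alpha> x, 1:] * g"
    using insert.prems(2) poly_eq_0_iff_dvd by (metis dvdE insertI1)
  have "\<forall>i\<in>F. poly g (\<alpha> i) = 0"
    using insert g by (auto simp: inj_on_def)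
  then have "(\<Prod>i\<in>F. [:- \<alpha> i, 1:]) dvd g"
    using insert.IH insert.prems(1) by (simp add: inj_on_insert)
  then have "[:- \<alpha> x, 1:] * (\<Prod>i\<in>F. [:- \<alpha> i, 1:]) dvd f"
    unfolding g by (rule mult_dvd_mono[OF dvd_refl])
  then show ?case
    by (simp only: prod.insert[OF insert.hyps])
qed

lemma coeff_sq_eq_if_dvd_gap_poly:
  fixes P f :: "'a::field poly"
  assumes P: "lead_coeff P = 1" "degree P = k" "2 \<le> k" "P dvd f"
    and f: "f \<noteq> 0" "degree f \<le> k + 1" "coeff f k = 0" "coeff f (k - 1) = 0"
  shows "coeff P (k - 1) ^ 2 = coeff P (k - 2)"
proof -
  obtain Q where f_eq: "f = P * Q"
    using P(4) by (elim dvdE)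
  have "Q \<noteq> 0" "P \<noteq> 0"
    using f(1) f_eq by auto
  then have deg_f: "degree f = k + degree Q"
    using P(2) f_eq by (simp add: degree_mult_eq)
  have "degree Q \<noteq> 0"
  proof
    assume "degree Q = 0"
    then have "coeff f k = lead_coeff Q"
      using f_eq P(1,2) coeff_mult_degree_sum[of P Q] by simp
    then show False
      using f(3) \<open>Q \<noteq> 0\<close> by simp
  qed
  then have "degree Q = 1"
    using deg_f f(2) by linarith
  define q0 q1 where "q0 = coeff Q 0" and "q1 = coeff Q 1"
  have Q: "Q = [:q0, q1:]" "q1 \<noteq> 0"
    using \<open>degree Q = 1\<close> \<open>Q \<noteq> 0\<close> leading_coeff_0_iff[of Q]
    by (auto simp: q0_def q1_def coeff_pCons coeff_eq_0 intro!: poly_eqI split: nat.split)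
  have coeff_f: "coeff f (Suc j) = q0 * coeff P (Suc j) + q1 * coeff P j" for j
    by (simp add: f_eq Q(1) mult.commute[of P])
  obtain k' where k: "k = Suc (Suc k')"
    using P(3) by (metis add_2_eq_Suc le_Suc_ex)
  have "q0 + q1 * coeff P (k - 1) = 0"
    using coeff_f[of "Suc k'"] f(3) P(1,2) k by simp
  then have "q0 = - (q1 * coeff P (k - 1))"
    by (simp add: eq_neg_iff_add_eq_0)
  moreover have "q0 * coeff P (k - 1) + q1 * coeff P (k - 2) = 0"
    using coeff_f[of k'] f(4) k by simp
  ultimately have "q1 * (coeff P (k - 2) - coeff P (k - 1) ^ 2) = 0"
    by (simp add: algebra_simps power2_eq_square)
  then show ?thesis
    using Q(2) by simp
qed

lemma coeff_prod_linear_eq_reflected: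
  fixes \<beta> :: "'i \<Rightarrow> 'a::idom"
  assumes "finite S" "j \<le> card S"
  shows "coeff (\<Prod>i\<in>S. [:- \<beta> i, 1:]) (card S - j) = coeff (\<Prod>i\<in>S. [:1, - \<beta> i:]) j"
proof -
  have "reflect_poly [:- b, 1:] = [:1, - b:]" for b :: 'a
    by (simp add: reflect_poly_pCons' monom_Suc monom_0)
  then have "reflect_poly (\<Prod>i\<in>S. [:- \<beta> i, 1:]) = (\<Prod>i\<in>S. [:1, - \<beta> i:])"
    by (simp add: reflect_poly_prod)
  moreover have "degree (\<Prod>i\<in>S. [:- \<beta> i, 1:]) = card S"
    using assms(1) by (subst degree_prod_sum_eq) auto
  ultimately show ?thesis
    using assms(2) by (metis coeff_reflect_poly not_less)
qed

lemma card_roots_gap_poly_less: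
  fixes f :: "'a::field poly" and \<alpha> :: "'i \<Rightarrow> 'a"
  assumes f: "f \<noteq> 0" "degree f \<le> k + 1" "coeff f k = 0" "coeff f (k - 1) = 0" and k: "2 \<le> k"
    and inj: "inj_on \<alpha> I"
    and generic: "\<And>S. S \<subseteq> I \<Longrightarrow> card S = k \<Longrightarrow> sym_h2 \<alpha> S \<noteq> 0"
  shows "card {i\<in>I. poly f (\<alpha> i) = 0} < k"
proof (rule ccontr)
  assume "\<not> card {i\<in>I. poly f (\<alpha> i) = 0} < k"
  then obtain S where S: "S \<subseteq> {i\<in>I. poly f (\<alpha> i) = 0}" "card S = k" "finite S"
    by (meson not_less obtain_subset_with_card_n)
  define P where "P = (\<Prod>i\<in>S. [:- \<alpha> i, 1:])"
  have "P dvd f"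
    unfolding P_def using S inj by (intro prod_linear_dvd_if_roots) (auto intro: inj_on_subset)
  moreover have "lead_coeff P = 1"
    unfolding P_def lead_coeff_prod by simp
  moreover have "degree P = k"
    using S(2,3) by (simp add: P_def degree_prod_sum_eq)
  ultimately have "coeff P (k - 1) ^ 2 = coeff P (k - 2)"
    using coeff_sq_eq_if_dvd_gap_poly f k by blast
  then show False
    using generic[of S] S coeff_prod_linear_eq_reflected[OF S(3), of _ \<alpha>] k
    by (auto simp: P_def sym_h2_def)
qed

section \<open>Codes given by a generator matrix\<close>

lemma linear_code_sum_mem:
  assumes C: "linear_code n C" and J: "finite J" "\<forall>j\<in>J. v j \<in> C"
  shows "(\<lambda>i. \<Sum>j\<in>J. c j * v j i) \<in> C"
  using J
proof (induction J rule: finite_induct)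
  case empty
  then show ?case
    using C by (simp add: linear_code_def)
next
  case (insert x J)
  then have "(\<lambda>i. c x * v x i) \<in> C" "(\<lambda>i. \<Sum>j\<in>J. c j * v j i) \<in> C"
    using C by (auto simp: linear_code_def)
  then show ?case
    using C insert.hyps by (simp add: linear_code_def)
qed

lemma linear_code_diff_mem:
  assumes C: "linear_code n C" and "x \<in> C" "y \<in> C"
  shows "(\<lambda>i. x i - y i) \<in> C"
proof -
  have add: "\<forall>x\<in>C. \<forall>y\<in>C. (\<lambda>i. x i + y i) \<in> C" and scale: "\<forall>a. \<forall>x\<in>C. (\<lambda>i. a * x i) \<in> C"
    using C by (simp_all add: linear_code_def)
  have "(\<lambda>i. x i + (- 1) * y i) \<in> C"
    using add[rule_format, OF \<open>x \<in> C\<close> scale[rule_format, OF \<open>y \<in> C\<close>]] .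
  then show ?thesis
    by simp
qed

lemma linear_code_gen_code: "linear_code n (gen_code k n G)"
  unfolding linear_code_def
proof (intro conjI ballI allI)
  fix c
  assume "c \<in> gen_code k n G"
  then show "is_word n c"
    by (auto simp: gen_code_def is_word_def)
next
  show "(\<lambda>_. 0) \<in> gen_code k n G"
    unfolding gen_code_def by (intro CollectI exI[of _ "\<lambda>_. 0"]) auto
next
  fix x y
  assume "x \<in> gen_code k n G" "y \<in> gen_code k n G"
  then obtain u v where "x = (\<lambda>i. if i < n then \<Sum>r<k. u r * G r i else 0)"
    "y = (\<lambda>i. if i < n then \<Sum>r<k. v r * G r i else 0)"
    by (auto simp: gen_code_def)
  then show "(\<lambda>i. x i + y i) \<in> gen_code k n G"
    unfolding gen_code_def
    by (intro CollectI exI[of _ "\<lambda>r. u r + v r"]) (auto simp: sum.distrib distrib_right)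
next
  fix a x
  assume "x \<in> gen_code k n G"
  then obtain u where "x = (\<lambda>i. if i < n then \<Sum>r<k. u r * G r i else 0)"
    by (auto simp: gen_code_def)
  then show "(\<lambda>i. a * x i) \<in> gen_code k n G"
    unfolding gen_code_def
    by (intro CollectI exI[of _ "\<lambda>r. a * u r"]) (auto simp: sum_distrib_left mult.assoc)
qed

lemma gen_code_row_mem:
  assumes "r < k"
  shows "(\<lambda>i. if i < n then G r i else 0) \<in> gen_code k n G"
proof -
  have "(\<Sum>r'<k. (if r' = r then 1 else 0) * G r' i) = G r i" for i
    using assms by (simp add: if_distrib[of "\<lambda>x. x * _"] cong: if_cong)
  then show ?thesis
    unfolding gen_code_def by (intro CollectI exI[of _ "\<lambda>r'. if r' = r then 1 else 0"]) auto
qed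

lemma gen_code_subset:
  assumes Z: "linear_code n Z" and rows: "\<And>r. r < k \<Longrightarrow> (\<lambda>i. if i < n then G r i else 0) \<in> Z"
  shows "gen_code k n G \<subseteq> Z"
proof
  fix c
  assume "c \<in> gen_code k n G"
  then obtain u where "c = (\<lambda>i. if i < n then \<Sum>r<k. u r * G r i else 0)"
    by (auto simp: gen_code_def)
  then have "c = (\<lambda>i. \<Sum>r<k. u r * (if i < n then G r i else 0))"
    by auto
  then show "c \<in> Z"
    using linear_code_sum_mem[OF Z, of "{..<k}"] rows by simp
qed

lemma gen_code_eq_image_PiE:
  "gen_code k n G = (\<lambda>u i. if i < n then \<Sum>r<k. u r * G r i else 0) ` PiE {..<k} (\<lambda>_. UNIV)"
proof -
  have enc_restrict: "(\<lambda>i. if i < n then \<Sum>r<k. u r * G r i else 0)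
      = (\<lambda>i. if i < n then \<Sum>r<k. restrict u {..<k} r * G r i else 0)" for u
    by auto
  show ?thesis
    unfolding gen_code_def
  proof (intro equalityI subsetI)
    fix c
    assume "c \<in> {\<lambda>i. if i < n then \<Sum>r<k. u r * G r i else 0 |u. True}"
    then obtain u where "c = (\<lambda>i. if i < n then \<Sum>r<k. u r * G r i else 0)"
      by blast
    then have "c = (\<lambda>i. if i < n then \<Sum>r<k. restrict u {..<k} r * G r i else 0)"
      using enc_restrict[of u] by (rule trans)
    then show "c \<in> (\<lambda>u i. if i < n then \<Sum>r<k. u r * G r i else 0) ` PiE {..<k} (\<lambda>_. UNIV)"
      by (intro image_eqI[of _ _ "restrict u {..<k}"]) auto
  qed blast
qed

lemma card_gen_code:
  fixes G :: "nat \<Rightarrow> nat \<Rightarrow> 'a::{field,finite}"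
  assumes indep: "\<And>u. \<forall>i<n. (\<Sum>r<k. u r * G r i) = 0 \<Longrightarrow> \<forall>r<k. u r = 0"
  shows "card (gen_code k n G) = CARD('a) ^ k"
proof -
  have "inj_on (\<lambda>u i. if i < n then \<Sum>r<k. u r * G r i else 0) (PiE {..<k} (\<lambda>_. UNIV))"
  proof (rule inj_onI)
    fix u v :: "nat \<Rightarrow> 'a"
    assume uv: "u \<in> PiE {..<k} (\<lambda>_. UNIV)" "v \<in> PiE {..<k} (\<lambda>_. UNIV)"
      and eq: "(\<lambda>i. if i < n then \<Sum>r<k. u r * G r i else 0) = (\<lambda>i. if i < n then \<Sum>r<k. v r * G r i else 0)"
    have "(\<Sum>r<k. u r * G r i) = (\<Sum>r<k. v r * G r i)" if "i < n" for i
      using fun_cong[OF eq, of i] that by simp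
    then have "\<forall>i<n. (\<Sum>r<k. (u r - v r) * G r i) = 0"
      by (simp add: left_diff_distrib sum_subtractf)
    then show "u = v"
      using indep[of "\<lambda>r. u r - v r"] uv by (intro PiE_ext) auto
  qed
  then show ?thesis
    by (simp add: gen_code_eq_image_PiE card_image card_PiE)
qed

lemma code_dim_eqI:
  fixes C :: "(nat \<Rightarrow> 'a::{field,finite}) set"
  assumes "card C = CARD('a) ^ k"
  shows "code_dim C = k"
  unfolding code_dim_def
proof (rule the_equality)
  show "card C = CARD('a) ^ k"
    by (rule assms)
  fix k'
  assume "card C = CARD('a) ^ k'"
  then show "k' = k"
    using assms one_less_CARD_field[where 'a='a] by (simp add: power_inject_exp)
qed

lemma singleton_bound_witness:
  fixes C :: "(nat \<Rightarrow> 'a::{field,finite}) set"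
  assumes C: "linear_code n C" "card C = CARD('a) ^ k" and k: "1 \<le> k"
  obtains c where "c \<in> C" "c \<noteq> (\<lambda>_. 0)" "hamming_weight n c \<le> n - k + 1"
proof -
  have "\<not> inj_on (\<lambda>c. restrict c {..<k - 1}) C"
  proof
    assume inj: "inj_on (\<lambda>c. restrict c {..<k - 1}) C"
    have "(\<lambda>c. restrict c {..<k - 1}) ` C \<subseteq> PiE {..<k - 1} (\<lambda>_. UNIV)"
      unfolding image_subset_iff restrict_PiE_iff by simp
    then have "card C \<le> card (PiE {..<k - 1} (\<lambda>_. UNIV :: 'a set))"
      using card_inj_on_le[OF inj] by (simp add: finite_PiE)
    then have "CARD('a) ^ k \<le> CARD('a) ^ (k - 1)"
      using C(2) by (simp add: card_PiE)
    then have "k \<le> k - 1"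
      using one_less_CARD_field[where 'a='a] power_le_imp_le_exp by blast
    then show False
      using k by linarith
  qed
  then obtain c1 c2 where c: "c1 \<in> C" "c2 \<in> C" "c1 \<noteq> c2"
    and agree: "restrict c1 {..<k - 1} = restrict c2 {..<k - 1}"
    unfolding inj_on_def by blast
  define d where "d = (\<lambda>i. c1 i - c2 i)"
  have "d \<in> C"
    unfolding d_def using C(1) c(1,2) by (rule linear_code_diff_mem)
  moreover have "d \<noteq> (\<lambda>_. 0)"
  proof
    assume "d = (\<lambda>_. 0)"
    then have "c1 = c2"
      by (simp add: d_def fun_eq_iff)
    then show False
      using c(3) by contradiction
  qed
  moreover have "d i = 0" if "i < k - 1" for i
    using fun_cong[OF agree, of i] that by (simp add: d_def)
  then have "{i. i < n \<and> d i \<noteq> 0} \<subseteq> {k - 1..<n}"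
    by (auto simp: not_less[symmetric] simp del: not_less)
  then have "hamming_weight n d \<le> card {k - 1..<n}"
    unfolding hamming_weight_def by (rule card_mono[OF finite_atLeastLessThan])
  then have "hamming_weight n d \<le> n - k + 1"
    by simp
  ultimately show ?thesis
    using that by blast
qed

lemma card_gen_code_if_few_zeros:
  fixes G :: "nat \<Rightarrow> nat \<Rightarrow> 'a::{field,finite}"
  assumes k: "k \<le> n"
    and few_zeros: "\<And>u. \<exists>r<k. u r \<noteq> 0 \<Longrightarrow> card {i. i < n \<and> (\<Sum>r<k. u r * G r i) = 0} < k"
  shows "card (gen_code k n G) = CARD('a) ^ k"
proof (rule card_gen_code)
  fix u
  assume "\<forall>i<n. (\<Sum>r<k. u r * G r i) = 0"
  then have "{i. i < n \<and> (\<Sum>r<k. u r * G r i) = 0} = {..<n}"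
    by auto
  then show "\<forall>r<k. u r = 0"
    using few_zeros[of u] k by auto
qed

lemma hamming_weight_gen_code_ge:
  fixes G :: "nat \<Rightarrow> nat \<Rightarrow> 'a::field"
  assumes k: "k \<le> n"
    and few_zeros: "\<And>u. \<exists>r<k. u r \<noteq> 0 \<Longrightarrow> card {i. i < n \<and> (\<Sum>r<k. u r * G r i) = 0} < k"
    and c: "c \<in> gen_code k n G" "c \<noteq> (\<lambda>_. 0)"
  shows "n - k + 1 \<le> hamming_weight n c"
proof -
  obtain u where c_eq: "c = (\<lambda>i. if i < n then \<Sum>r<k. u r * G r i else 0)"
    using c(1) unfolding gen_code_def by blast
  have "\<exists>r<k. u r \<noteq> 0"
  proof (rule ccontr)
    assume "\<not> (\<exists>r<k. u r \<noteq> 0)"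
    then have "c = (\<lambda>_. 0)"
      using c_eq by auto
    then show False
      using c(2) by contradiction
  qed
  moreover have "{i. i < n \<and> c i = 0} = {i. i < n \<and> (\<Sum>r<k. u r * G r i) = 0}"
    using c_eq by auto
  ultimately have "card {i. i < n \<and> c i = 0} < k"
    using few_zeros by simp
  moreover have "{i. i < n \<and> c i \<noteq> 0} = {..<n} - {i. i < n \<and> c i = 0}"
    by auto
  then have "hamming_weight n c = n - card {i. i < n \<and> c i = 0}"
    unfolding hamming_weight_def by (simp add: card_Diff_subset subset_eq)
  ultimately show ?thesis
    using k by linarith
qed

lemma is_MDS_gen_code:
  fixes G :: "nat \<Rightarrow> nat \<Rightarrow> 'a::{field,finite}"
  assumes k: "1 \<le> k" "k \<le> n"
    and few_zeros: "\<And>u. \<exists>r<k. u r \<noteq> 0 \<Longrightarrow> card {i. i < n \<and> (\<Sum>r<k. u r * G r i) = 0} < k"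
  shows "is_MDS n (gen_code k n G)"
proof -
  let ?C = "gen_code k n G"
  have card_C: "card ?C = CARD('a) ^ k"
    using k(2) few_zeros by (rule card_gen_code_if_few_zeros)
  have weight: "n - k + 1 \<le> hamming_weight n c" if "c \<in> ?C" "c \<noteq> (\<lambda>_. 0)" for c
    using k(2) few_zeros that by (rule hamming_weight_gen_code_ge)
  obtain d where d: "d \<in> ?C" "d \<noteq> (\<lambda>_. 0)" "hamming_weight n d \<le> n - k + 1"
    using singleton_bound_witness[OF linear_code_gen_code card_C k(1)] .
  have "min_distance n ?C = n - k + 1"
    unfolding min_distance_def
  proof (rule Min_eqI)
    have "finite ?C"
      using card_C by (intro card_ge_0_finite) simp
    then show "finite (hamming_weight n ` (?C - {\<lambda>_. 0}))"
      by simp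
  next
    fix w
    assume "w \<in> hamming_weight n ` (?C - {\<lambda>_. 0})"
    then show "n - k + 1 \<le> w"
      using weight by blast
  next
    show "n - k + 1 \<in> hamming_weight n ` (?C - {\<lambda>_. 0})"
      using d weight[OF d(1,2)] by (intro image_eqI[of _ _ d]) auto
  qed
  then show ?thesis
    unfolding is_MDS_def using linear_code_gen_code code_dim_eqI[OF card_C] by simp
qed

section \<open>Generalized Reed-Solomon codes\<close>

lemma poly_eq_0_if_roots:
  fixes f :: "'a::idom poly"
  assumes "inj_on a {..<n}" "degree f < n" "\<forall>i<n. poly f (a i) = 0"
  shows "f = 0"
proof (rule ccontr)
  assume "f \<noteq> 0"
  have "n = card (a ` {..<n})"
    using assms(1) by (simp add: card_image)
  also have "\<dots> \<le> card {x. poly f x = 0}"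
    using assms(3) poly_roots_finite[OF \<open>f \<noteq> 0\<close>] by (intro card_mono) auto
  also have "\<dots> \<le> degree f"
    using card_poly_roots_bound[OF \<open>f \<noteq> 0\<close>] .
  finally show False
    using assms(2) by simp
qed

lemma GRS_eq_gen_code:
  assumes "1 \<le> N"
  shows "GRS n N a w = gen_code N n (\<lambda>j i. w i * a i ^ j)"
proof (intro equalityI subsetI)
  fix c
  assume "c \<in> GRS n N a w"
  then obtain f where c: "c = (\<lambda>i. if i < n then w i * poly f (a i) else 0)" and "degree f < N"
    using assms unfolding GRS_def by fastforce
  then have expand: "w i * poly f (a i) = (\<Sum>j<N. coeff f j * (w i * a i ^ j))" for i
    using poly_eq_sum_lessThan[of f N] by (simp add: sum_distrib_left mult_ac)
  have "c = (\<lambda>i. if i < n then \<Sum>j<N. coeff f j * (w i * a i ^ j) else 0)"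
    by (simp only: c expand)
  then show "c \<in> gen_code N n (\<lambda>j i. w i * a i ^ j)"
    unfolding gen_code_def by blast
next
  fix c
  assume "c \<in> gen_code N n (\<lambda>j i. w i * a i ^ j)"
  then obtain u where c: "c = (\<lambda>i. if i < n then \<Sum>j<N. u j * (w i * a i ^ j) else 0)"
    unfolding gen_code_def by blast
  define f where "f = (\<Sum>j<N. monom (u j) j)"
  have "degree f \<le> N - 1"
    unfolding f_def by (intro degree_sum_le) (auto intro: order_trans[OF degree_monom_le])
  moreover have "w i * poly f (a i) = (\<Sum>j<N. u j * (w i * a i ^ j))" for i
    by (simp add: f_def poly_sum poly_monom sum_distrib_left mult_ac)
  then have "c = (\<lambda>i. if i < n then w i * poly f (a i) else 0)"
    by (simp only: c)
  ultimately show "c \<in> GRS n N a w"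
    unfolding GRS_def by blast
qed

lemma card_GRS:
  fixes a w :: "nat \<Rightarrow> 'a::{field,finite}"
  assumes a: "inj_on a {..<n}" and w: "\<forall>i<n. w i \<noteq> 0" and N: "1 \<le> N" "N \<le> n"
  shows "card (GRS n N a w) = CARD('a) ^ N"
  unfolding GRS_eq_gen_code[OF N(1)]
proof (rule card_gen_code)
  fix u
  assume zero: "\<forall>i<n. (\<Sum>j<N. u j * (w i * a i ^ j)) = 0"
  have "poly (\<Sum>j<N. monom (u j) j) (a i) = 0" if "i < n" for i
  proof -
    have "w i * poly (\<Sum>j<N. monom (u j) j) (a i) = (\<Sum>j<N. u j * (w i * a i ^ j))"
      by (simp add: poly_sum poly_monom sum_distrib_left mult_ac)
    then show ?thesis
      using zero w that by simp
  qed
  moreover have "degree (\<Sum>j<N. monom (u j) j) \<le> N - 1"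
    by (intro degree_sum_le) (auto intro: order_trans[OF degree_monom_le])
  then have "degree (\<Sum>j<N. monom (u j) j) < n"
    using N by linarith
  ultimately have zero_poly: "(\<Sum>j<N. monom (u j) j) = 0"
    using poly_eq_0_if_roots[OF a] by blast
  show "\<forall>j<N. u j = 0"
  proof (intro allI impI)
    fix j
    assume "j < N"
    then have "coeff (\<Sum>j'<N. monom (u j') j') j = u j"
      by (simp add: coeff_sum coeff_monom)
    then show "u j = 0"
      using zero_poly by simp
  qed
qed

lemma GRS_mono:
  assumes "N \<le> N'"
  shows "GRS n N a w \<subseteq> GRS n N' a w"
  using assms unfolding GRS_def by fastforce

lemma GRS_mult_mem:
  assumes "c \<in> GRS n N a w" "c' \<in> GRS n N a w'" "1 \<le> N"
  shows "(\<lambda>i. c i * c' i) \<in> GRS n (2 * N - 1) a (\<lambda>i. w i * w' i)"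
proof -
  obtain f g where c: "c = (\<lambda>i. if i < n then w i * poly f (a i) else 0)" "degree f \<le> N - 1"
    and c': "c' = (\<lambda>i. if i < n then w' i * poly g (a i) else 0)" "degree g \<le> N - 1"
    using assms(1,2) unfolding GRS_def by blast
  have "degree (f * g) \<le> 2 * N - 1 - 1"
    using degree_mult_le[of f g] c(2) c'(2) assms(3) by linarith
  moreover have "(\<lambda>i. c i * c' i) = (\<lambda>i. if i < n then (w i * w' i) * poly (f * g) (a i) else 0)"
    using c(1) c'(1) by (auto simp: mult_ac)
  ultimately show ?thesis
    unfolding GRS_def by blast
qed

lemma GRS_if_code_equiv_GRS:
  fixes C :: "(nat \<Rightarrow> 'a::field) set"
  assumes words: "\<forall>c\<in>C. is_word n c" and equiv: "code_equiv n C (GRS n N a w)"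
    and a: "inj_on a {..<n}" and w: "\<forall>i<n. w i \<noteq> 0"
  obtains a' w' where "inj_on a' {..<n}" "\<forall>i<n. w' i \<noteq> 0" "C = GRS n N a' w'"
proof -
  obtain \<sigma> s where \<sigma>: "\<sigma> permutes {..<n}" and s: "\<forall>i<n. s i \<noteq> 0"
    and D: "GRS n N a w = (\<lambda>c i. if i < n then s i * c (\<sigma> i) else 0) ` C"
    using equiv unfolding code_equiv_def by blast
  define \<tau> where "\<tau> = inv_into UNIV \<sigma>"
  have \<tau>: "\<tau> permutes {..<n}" "\<And>i. \<sigma> (\<tau> i) = i"
    using permutes_inv[OF \<sigma>] permutes_inverses(1)[OF \<sigma>] by (simp_all add: \<tau>_def)
  have \<tau>_lt: "\<tau> i < n" if "i < n" for i
    using permutes_in_image[OF \<tau>(1)] that by simp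
  define \<psi> where "\<psi> = (\<lambda>(x :: nat \<Rightarrow> 'a) i. if i < n then x (\<tau> i) / s (\<tau> i) else 0)"
  have "\<psi> ((\<lambda>i. if i < n then s i * c (\<sigma> i) else 0)) = c" if "c \<in> C" for c
    using words that s \<tau>(2) \<tau>_lt by (auto simp: \<psi>_def is_word_def fun_eq_iff)
  then have "C = \<psi> ` GRS n N a w"
    unfolding D image_image by simp
  also have "\<dots> = GRS n N (\<lambda>i. a (\<tau> i)) (\<lambda>i. w (\<tau> i) / s (\<tau> i))"
  proof -
    have \<psi>_GRS: "\<psi> (\<lambda>i. if i < n then w i * poly f (a i) else 0)
        = (\<lambda>i. if i < n then w (\<tau> i) / s (\<tau> i) * poly f (a (\<tau> i)) else 0)" for f
      by (auto simp: \<psi>_def \<tau>_lt)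
    have "\<psi> ` {(\<lambda>i. if i < n then w i * poly f (a i) else 0) | f. degree f \<le> N - 1}
        = {\<psi> (\<lambda>i. if i < n then w i * poly f (a i) else 0) | f. degree f \<le> N - 1}"
      by blast
    then show ?thesis
      unfolding GRS_def \<psi>_GRS .
  qed
  finally have C_eq: "C = GRS n N (\<lambda>i. a (\<tau> i)) (\<lambda>i. w (\<tau> i) / s (\<tau> i))" .
  have "inj_on (\<lambda>i. a (\<tau> i)) {..<n}"
  proof (rule inj_onI)
    fix x y
    assume "x \<in> {..<n}" "y \<in> {..<n}" "a (\<tau> x) = a (\<tau> y)"
    then have "\<tau> x = \<tau> y"
      using inj_onD[OF a, of "\<tau> x" "\<tau> y"] \<tau>_lt by simp
    then show "x = y"
      by (rule injD[OF permutes_inj[OF \<tau>(1)]])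
  qed
  moreover have "\<forall>i<n. w (\<tau> i) / s (\<tau> i) \<noteq> 0"
    using w s \<tau>_lt by simp
  ultimately show ?thesis
    using C_eq by (rule that)
qed

lemma not_GRS_equiv_if_square_large:
  fixes C :: "(nat \<Rightarrow> 'a::{field,finite}) set"
  assumes words: "\<forall>c\<in>C. is_word n c" and card_C: "card C = CARD('a) ^ k"
    and k: "1 \<le> k" "2 * k \<le> n"
    and square: "\<And>Z. linear_code n Z \<Longrightarrow> finite Z \<Longrightarrow> \<forall>c\<in>C. \<forall>c'\<in>C. (\<lambda>i. c i * c' i) \<in> Z
      \<Longrightarrow> CARD('a) ^ (2 * k) \<le> card Z"
  shows "\<not> is_GRS_equiv n C"
proof
  assume "is_GRS_equiv n C"
  then obtain N a w where "inj_on a {..<n}" "\<forall>i<n. w i \<noteq> 0" "code_equiv n C (GRS n N a w)"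
    unfolding is_GRS_equiv_def by blast
  then obtain a' w' where a': "inj_on a' {..<n}" and w': "\<forall>i<n. w' i \<noteq> 0" and C: "C = GRS n N a' w'"
    using GRS_if_code_equiv_GRS[OF words] by metis
  have q: "1 < CARD('a)"
    by (rule one_less_CARD_field)
  have "N \<le> k"
  proof (rule ccontr)
    assume "\<not> N \<le> k"
    then have "GRS n (k + 1) a' w' \<subseteq> C"
      unfolding C by (intro GRS_mono) simp
    then have "card (GRS n (k + 1) a' w') \<le> card C"
      using card_C by (intro card_mono) (simp_all add: card_ge_0_finite)
    then have "CARD('a) ^ (k + 1) \<le> CARD('a) ^ k"
      using card_GRS[OF a' w', of "k + 1"] k card_C by simp
    then show False
      using q by simp
  qed
  then have C_sub: "C \<subseteq> GRS n k a' w'"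
    unfolding C by (rule GRS_mono)
  define Z where "Z = GRS n (2 * k - 1) a' (\<lambda>i. w' i * w' i)"
  have card_Z: "card Z = CARD('a) ^ (2 * k - 1)"
    unfolding Z_def using k w' by (intro card_GRS[OF a']) auto
  have "linear_code n Z"
    unfolding Z_def using k by (simp add: GRS_eq_gen_code linear_code_gen_code)
  moreover have "finite Z"
    using card_Z by (intro card_ge_0_finite) simp
  moreover have "\<forall>c\<in>C. \<forall>c'\<in>C. (\<lambda>i. c i * c' i) \<in> Z"
    using C_sub k unfolding Z_def by (blast intro: GRS_mult_mem)
  ultimately have "CARD('a) ^ (2 * k) \<le> CARD('a) ^ (2 * k - 1)"
    using square card_Z by metis
  then show False
    using q k by simp
qed

section \<open>The code with row exponents 0, ..., k - 2 and k + 1\<close>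

definition row_exp :: "nat \<Rightarrow> nat \<Rightarrow> nat" where
  "row_exp k r = (if r \<le> k - 2 then r else k + 1)"

(* k >= 4 gives 2k - 4 >= k, so the two cases below cover every j < 2k. *)
lemma row_exp_sum_cover:
  assumes "4 \<le> k" "j < 2 * k"
  obtains r1 r2 where "r1 < k" "r2 < k" "j = row_exp k r1 + row_exp k r2"
proof (cases "j \<le> 2 * k - 4")
  case True
  define r1 where "r1 = min j (k - 2)"
  have "r1 \<le> k - 2" "j - r1 \<le> k - 2"
    using True by (auto simp: r1_def)
  then show ?thesis
    using assms(1) by (intro that[of r1 "j - r1"]) (auto simp: row_exp_def r1_def)
next
  case False
  then show ?thesis
    using assms by (intro that[of "k - 1" "j - (k + 1)"]) (auto simp: row_exp_def)
qed

lemma few_zeros_row_exp: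
  fixes \<alpha> :: "nat \<Rightarrow> 'a::field"
  assumes k: "2 \<le> k" and inj: "inj_on \<alpha> {..<n}"
    and generic: "\<And>S. S \<subseteq> {..<n} \<Longrightarrow> card S = k \<Longrightarrow> sym_h2 \<alpha> S \<noteq> 0"
    and u: "\<exists>r<k. u r \<noteq> 0"
  shows "card {i. i < n \<and> (\<Sum>r<k. u r * \<alpha> i ^ row_exp k r) = 0} < k"
proof -
  define f where "f = (\<Sum>r<k. monom (u r) (row_exp k r))"
  have coeff_f: "coeff f j = (\<Sum>r<k. if row_exp k r = j then u r else 0)" for j
    by (simp add: f_def coeff_sum coeff_monom)
  obtain r0 where r0: "r0 < k" "u r0 \<noteq> 0"
    using u by blast
  have same: "row_exp k r = row_exp k r0 \<longleftrightarrow> r = r0" if "r < k" for r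
    using that r0(1) by (auto simp: row_exp_def)
  have "coeff f (row_exp k r0) = (\<Sum>r<k. if r = r0 then u r else 0)"
    unfolding coeff_f using same by (intro sum.cong) auto
  also have "\<dots> = u r0"
    using r0(1) by simp
  finally have "f \<noteq> 0"
    using r0(2) by auto
  moreover have "degree f \<le> k + 1"
    by (rule degree_le) (auto simp: coeff_f row_exp_def intro!: sum.neutral)
  moreover have "coeff f k = 0" "coeff f (k - 1) = 0"
    using k by (auto simp: coeff_f row_exp_def intro!: sum.neutral)
  ultimately have "card {i\<in>{..<n}. poly f (\<alpha> i) = 0} < k"
    using k inj generic by (intro card_roots_gap_poly_less) auto
  moreover have "poly f x = (\<Sum>r<k. u r * x ^ row_exp k r)" for x
    by (simp add: f_def poly_sum poly_monom)
  ultimately show ?thesis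
    by simp
qed

lemma card_square_row_exp_code_ge:
  fixes \<alpha> :: "nat \<Rightarrow> 'a::{field,finite}"
  assumes k: "4 \<le> k" "2 * k \<le> n" and inj: "inj_on \<alpha> {..<n}"
    and Z: "linear_code n Z" "finite Z"
    and square: "\<forall>c\<in>gen_code k n (\<lambda>r i. \<alpha> i ^ row_exp k r). \<forall>c'\<in>gen_code k n (\<lambda>r i. \<alpha> i ^ row_exp k r).
      (\<lambda>i. c i * c' i) \<in> Z"
  shows "CARD('a) ^ (2 * k) \<le> card Z"
proof -
  have "1 \<le> 2 * k"
    using k by simp
  have "GRS n (2 * k) \<alpha> (\<lambda>_. 1) \<subseteq> Z"
    unfolding GRS_eq_gen_code[OF \<open>1 \<le> 2 * k\<close>]
  proof (rule gen_code_subset[OF Z(1)])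
    fix j
    assume "j < 2 * k"
    then obtain r1 r2 where r: "r1 < k" "r2 < k" "j = row_exp k r1 + row_exp k r2"
      using k(1) row_exp_sum_cover by blast
    have "(\<lambda>i. (if i < n then \<alpha> i ^ row_exp k r1 else 0) * (if i < n then \<alpha> i ^ row_exp k r2 else 0)) \<in> Z"
      by (rule square[rule_format, OF gen_code_row_mem[OF r(1)] gen_code_row_mem[OF r(2)]])
    then show "(\<lambda>i. if i < n then 1 * \<alpha> i ^ j else 0) \<in> Z"
      using r(3) by (simp add: power_add if_distrib cong: if_cong)
  qed
  then have "card (GRS n (2 * k) \<alpha> (\<lambda>_. 1)) \<le> card Z"
    using Z(2) by (rule card_mono[rotated])
  then show ?thesis
    using card_GRS[OF inj, of "\<lambda>_. 1" "2 * k"] k by simp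
qed

lemma non_GRS_MDS_row_exp_code:
  fixes \<alpha> :: "nat \<Rightarrow> 'a::{field,finite}"
  assumes k: "4 \<le> k" "2 * k \<le> n" and inj: "inj_on \<alpha> {..<n}"
    and generic: "\<And>S. S \<subseteq> {..<n} \<Longrightarrow> card S = k \<Longrightarrow> sym_h2 \<alpha> S \<noteq> 0"
  shows "non_GRS_MDS n (gen_code k n (\<lambda>r i. \<alpha> i ^ row_exp k r))"
proof -
  let ?C = "gen_code k n (\<lambda>r i. \<alpha> i ^ row_exp k r)"
  have few_zeros: "card {i. i < n \<and> (\<Sum>r<k. u r * \<alpha> i ^ row_exp k r) = 0} < k"
    if "\<exists>r<k. u r \<noteq> 0" for u
    using k inj generic that by (intro few_zeros_row_exp) auto
  have "is_MDS n ?C"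
    using k few_zeros by (intro is_MDS_gen_code) auto
  moreover have "\<not> is_GRS_equiv n ?C"
  proof (rule not_GRS_equiv_if_square_large)
    show "\<forall>c\<in>?C. is_word n c"
      using linear_code_gen_code unfolding linear_code_def by blast
    show "card ?C = CARD('a) ^ k"
      using k few_zeros by (intro card_gen_code_if_few_zeros) auto
    fix Z
    assume "linear_code n Z" "finite Z" "\<forall>c\<in>?C. \<forall>c'\<in>?C. (\<lambda>i. c i * c' i) \<in> Z"
    then show "CARD('a) ^ (2 * k) \<le> card Z"
      using k inj by (intro card_square_row_exp_code_ge) auto
  qed (use k in auto)
  ultimately show ?thesis
    unfolding non_GRS_MDS_def by (rule conjI)
qed

theorem theorem4p7:
  fixes p m n k t h :: nat and \<gamma> :: "'a::{field,finite}" and \<alpha> :: "nat \<Rightarrow> 'a"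
  assumes "prime p" and "CARD('a) = p ^ m"
    and "generates_field \<gamma>"
    and "t = (m - 1) div 2"
    and "4 \<le> k" and "2 * k \<le> n - 1" and "n \<le> p ^ t"
    and "h = k + 1"
    and "inj_on \<alpha> {..<n}"
    and "\<forall>i<n. \<exists>a :: nat \<Rightarrow> 'a. (\<forall>j<t. a j \<in> prime_subfield) \<and>
            \<alpha> i = \<gamma> ^ t + (\<Sum>j<t. a j * \<gamma> ^ j)"
    and "\<not> p dvd (k * (k + 1) div 2)"
  shows "non_GRS_MDS n
           (gen_code k n (\<lambda>r i. \<alpha> i ^ (if r \<le> k - 2 then r else h)))"
proof -
  (* The hypothesis n <= p ^ t only guarantees that n such points exist. *)
  have "m \<noteq> 0"
    using assms(2) one_less_CARD_field[where 'a='a] by (metis less_irrefl power_0)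
  then have t: "2 * t < m"
    using assms(4) by simp
  have \<alpha>_poly: "\<exists>A. \<alpha> i = poly A \<gamma> \<and> degree A \<le> t \<and> coeff A t = 1 \<and> (\<forall>j. coeff A j \<in> \<int>)"
    if i: "i < n" for i
    using assms(10) i monic_Ints_poly_repr by metis
  have "sym_h2 \<alpha> S \<noteq> 0" if "S \<subseteq> {..<n}" "card S = k" for S
    using that assms(11) \<alpha>_poly
    by (intro sym_h2_ne_0[OF assms(1-3) t]) (auto intro: finite_subset)
  then have "non_GRS_MDS n (gen_code k n (\<lambda>r i. \<alpha> i ^ row_exp k r))"
    using assms(5,6,9) by (intro non_GRS_MDS_row_exp_code) auto
  then show ?thesis
    unfolding row_exp_def assms(8) .
qed

end
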